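(* Let $n\ge1$, $X=\{0,1,\dots,n-1\}$, $f:X\to X$ any function, and $s\in X$. Let $(x_0,x_1,\dots)$ be the state sequence of the counter-assisted generator: $x_0=s$ and $x_i=f(x_{i-1})+i \pmod n$ for $i\ge1$. Then for all indices $i,j\ge0$ with $i\not\equiv j\pmod n$: if $x_i=x_j$ then $x_{i+1}\neq x_{j+1}$, and, if moreover $i,j\ge1$, also $x_{i-1}\neq x_{j-1}$.
   Context: Addition in $X$ is carried out modulo $n$. *)

theory Defs
  imports Main
begin

fun cag_state :: "nat \<Rightarrow> (nat \<Rightarrow> nat) \<Rightarrow> nat \<Rightarrow> nat \<Rightarrow> nat" where
  "cag_state n f s 0 = s"
| "cag_state n f s (Suc i) = (f (cag_state n f s i) + Suc i) mod n"

end

theory Submission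
  imports Defs "HOL-Number_Theory.Cong"
begin

text \<open>Two states that agree are mapped to the same value of f, so their successors differ
  exactly by the difference of the counters; this gives both claims, the second one applied
  at the predecessors.\<close>

lemma cag_state_Suc_eq_iff:
  assumes "cag_state n f s i = cag_state n f s j"
  shows "cag_state n f s (Suc i) = cag_state n f s (Suc j) \<longleftrightarrow> [i = j] (mod n)"
proof -
  have "cag_state n f s (Suc i) = cag_state n f s (Suc j)
      \<longleftrightarrow> [f (cag_state n f s i) + Suc i = f (cag_state n f s i) + Suc j] (mod n)"
    using assms by (simp add: cong_def)
  also have "\<dots> \<longleftrightarrow> [Suc i = Suc j] (mod n)"
    by (rule cong_add_lcancel_nat)
  also have "\<dots> \<longleftrightarrow> [i = j] (mod n)"
    using cong_add_rcancel_nat[of i 1 j n] by simp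
  finally show ?thesis .
qed

theorem mainTheorem2:
  fixes n s :: nat and f :: "nat \<Rightarrow> nat" and i j :: nat
  assumes "n \<ge> 1"
    and "\<forall>x\<in>{0..<n}. f x \<in> {0..<n}"
    and "s \<in> {0..<n}"
    and "i mod n \<noteq> j mod n"
    and "cag_state n f s i = cag_state n f s j"
  shows "cag_state n f s (i + 1) \<noteq> cag_state n f s (j + 1)
     \<and> (i \<ge> 1 \<and> j \<ge> 1 \<longrightarrow> cag_state n f s (i - 1) \<noteq> cag_state n f s (j - 1))"
proof
  have incongruent: "\<not> [i = j] (mod n)"
    using assms(4) by (simp add: cong_def)
  then show "cag_state n f s (i + 1) \<noteq> cag_state n f s (j + 1)"
    using cag_state_Suc_eq_iff[OF assms(5)] by simp
  show "i \<ge> 1 \<and> j \<ge> 1 \<longrightarrow> cag_state n f s (i - 1) \<noteq> cag_state n f s (j - 1)"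
  proof (intro impI notI)
    assume pos: "i \<ge> 1 \<and> j \<ge> 1"
      and pred_eq: "cag_state n f s (i - 1) = cag_state n f s (j - 1)"
    obtain a b where i: "i = Suc a" and j: "j = Suc b"
      using pos by (cases i; cases j) auto
    have "[a = b] (mod n)"
      using cag_state_Suc_eq_iff[of n f s a b] pred_eq assms(5) by (simp add: i j)
    then show False
      using incongruent cong_add_rcancel_nat[of a 1 b n] by (simp add: i j)
  qed
qed

end
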